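(* Let $\mu$ be a nonvanishing differentiable real function and $\omega^2$ a real function of $t$. The initial value problem for the variable parametric potential Burgers equation $$\frac{\partial\Upsilon}{\partial t}+\frac{\dot\mu(t)}{\mu(t)}\Upsilon+\frac12\Big(\frac{\partial\Upsilon}{\partial x}\Big)^2=\frac{1}{2\mu(t)}\frac{\partial^2\Upsilon}{\partial x^2}-\frac{\omega^2(t)}{2}x^2,\qquad \Upsilon(x,t)|_{t=t_0}=\Upsilon(x,t_0),$$ has the formal solution $\Upsilon(x,t)=-\frac{1}{\mu(t)}\ln\Phi(x,t)$, where $\Phi(x,t)$ satisfies the initial value problem for the variable parametric parabolic equation $$\frac{\partial\Phi}{\partial t}=\frac{1}{2\mu(t)}\frac{\partial^2\Phi}{\partial x^2}+\frac{\mu(t)\omega^2(t)}{2}x^2\Phi,\qquad \Phi(x,t_0)=\exp\big(-\mu(t_0)\Upsilon(x,t_0)\big).$$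
   Context: Dots denote $t$-derivatives. *)

theory Defs
  imports "HOL-Analysis.Analysis"
begin

end

theory Submission
  imports Defs
begin

text \<open>The Cole--Hopf substitution \<open>\<Upsilon> = - ln \<Phi> / \<mu>\<close>: by the chain rule,
  \<open>\<Upsilon>\<^sub>t = - \<Phi>\<^sub>t / (\<mu> \<Phi>) + \<dot>\<mu> ln \<Phi> / \<mu>\<^sup>2\<close>, \<open>\<Upsilon>\<^sub>x = - \<Phi>\<^sub>x / (\<mu> \<Phi>)\<close> and
  \<open>\<Upsilon>\<^sub>x\<^sub>x = - (\<Phi>\<^sub>x\<^sub>x \<Phi> - \<Phi>\<^sub>x\<^sup>2) / (\<mu> \<Phi>\<^sup>2)\<close>. The term \<open>\<dot>\<mu> ln \<Phi> / \<mu>\<^sup>2\<close> is cancelled by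
  the damping term \<open>\<dot>\<mu> \<Upsilon> / \<mu>\<close>, the square \<open>\<Upsilon>\<^sub>x\<^sup>2 / 2\<close> cancels the \<open>\<Phi>\<^sub>x\<^sup>2\<close> part of
  \<open>\<Upsilon>\<^sub>x\<^sub>x / (2 \<mu>)\<close>, and what remains is the parabolic equation for \<open>\<Phi>\<close> divided by
  \<open>- \<mu> \<Phi>\<close>.\<close>

lemma has_real_derivative_neg_ln_divide:
  fixes f m :: "real \<Rightarrow> real"
  assumes "(f has_real_derivative f') (at t within S)"
    and "(m has_real_derivative m') (at t within S)"
    and "f t > 0" and "m t \<noteq> 0"
  shows "((\<lambda>s. - ln (f s) / m s) has_real_derivative
           - f' / (f t * m t) + ln (f t) * m' / (m t)\<^sup>2) (at t within S)"
  using assms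
  by (auto intro!: derivative_eq_intros simp: field_simps power2_eq_square)

lemma has_real_derivative_neg_ln_divide_const:
  fixes f :: "real \<Rightarrow> real"
  assumes "(f has_real_derivative f') (at x within S)"
    and "f x > 0" and "c \<noteq> 0"
  shows "((\<lambda>y. - ln (f y) / c) has_real_derivative - f' / (f x * c)) (at x within S)"
  using has_real_derivative_neg_ln_divide[OF assms(1) DERIV_const assms(2-3)] by simp

lemma has_real_derivative_neg_quotient_divide_const:
  fixes f g :: "real \<Rightarrow> real"
  assumes "(g has_real_derivative g') (at x within S)"
    and "(f has_real_derivative f') (at x within S)"
    and "f x \<noteq> 0" and "c \<noteq> 0"
  shows "((\<lambda>y. - g y / (f y * c)) has_real_derivative
           - (g' * f x - g x * f') / ((f x)\<^sup>2 * c)) (at x within S)"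
  using assms
  by (auto intro!: derivative_eq_intros simp: field_simps power2_eq_square)

lemma cole_hopf_transforms_parabolic_to_burgers:
  fixes \<phi> \<phi>t \<phi>x \<phi>xx m m' w2 x :: real
  assumes "\<phi> > 0" and "m \<noteq> 0"
    and "\<phi>t = \<phi>xx / (2 * m) + m * w2 / 2 * x\<^sup>2 * \<phi>"
  shows "(- \<phi>t / (\<phi> * m) + ln \<phi> * m' / m\<^sup>2) + m' / m * (- ln \<phi> / m)
           + (- \<phi>x / (\<phi> * m))\<^sup>2 / 2
         = - (\<phi>xx * \<phi> - \<phi>x * \<phi>x) / (\<phi>\<^sup>2 * m) / (2 * m) - w2 / 2 * x\<^sup>2"
  using assms by (simp add: field_simps power2_eq_square)

theorem proposition4:
  fixes \<mu> \<mu>' w2 :: "real \<Rightarrow> real"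
    and \<Phi> \<Phi>t \<Phi>x \<Phi>xx :: "real \<Rightarrow> real \<Rightarrow> real"
    and \<Upsilon>0 :: "real \<Rightarrow> real"
    and t0 :: real
  assumes mu_deriv: "\<And>t. (\<mu> has_real_derivative \<mu>' t) (at t)"
    and mu_nz: "\<And>t. \<mu> t \<noteq> 0"
    and Phi_pos: "\<And>x t. \<Phi> x t > 0"
    and Phi_t: "\<And>x t. ((\<lambda>s. \<Phi> x s) has_real_derivative \<Phi>t x t) (at t)"
    and Phi_x: "\<And>x t. ((\<lambda>y. \<Phi> y t) has_real_derivative \<Phi>x x t) (at x)"
    and Phi_xx: "\<And>x t. ((\<lambda>y. \<Phi>x y t) has_real_derivative \<Phi>xx x t) (at x)"
    and Phi_pde: "\<And>x t. \<Phi>t x t = \<Phi>xx x t / (2 * \<mu> t) + \<mu> t * w2 t / 2 * x\<^sup>2 * \<Phi> x t"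
    and Phi_init: "\<And>x. \<Phi> x t0 = exp (- \<mu> t0 * \<Upsilon>0 x)"
  shows "\<exists>Ut Ux Uxx :: real \<Rightarrow> real \<Rightarrow> real.
           (\<forall>x t. ((\<lambda>s. - ln (\<Phi> x s) / \<mu> s) has_real_derivative Ut x t) (at t)) \<and>
           (\<forall>x t. ((\<lambda>y. - ln (\<Phi> y t) / \<mu> t) has_real_derivative Ux x t) (at x)) \<and>
           (\<forall>x t. ((\<lambda>y. Ux y t) has_real_derivative Uxx x t) (at x)) \<and>
           (\<forall>x t. Ut x t + \<mu>' t / \<mu> t * (- ln (\<Phi> x t) / \<mu> t) + (Ux x t)\<^sup>2 / 2
                   = Uxx x t / (2 * \<mu> t) - w2 t / 2 * x\<^sup>2) \<and>
           (\<forall>x. - ln (\<Phi> x t0) / \<mu> t0 = \<Upsilon>0 x)"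
proof (intro exI conjI allI)
  define Ux where "Ux x t = - \<Phi>x x t / (\<Phi> x t * \<mu> t)" for x t
  fix x t
  show "((\<lambda>s. - ln (\<Phi> x s) / \<mu> s) has_real_derivative
          - \<Phi>t x t / (\<Phi> x t * \<mu> t) + ln (\<Phi> x t) * \<mu>' t / (\<mu> t)\<^sup>2) (at t)"
    by (rule has_real_derivative_neg_ln_divide[OF Phi_t mu_deriv Phi_pos mu_nz])
  show "((\<lambda>y. - ln (\<Phi> y t) / \<mu> t) has_real_derivative Ux x t) (at x)"
    unfolding Ux_def by (rule has_real_derivative_neg_ln_divide_const[OF Phi_x Phi_pos mu_nz])
  show "((\<lambda>y. Ux y t) has_real_derivative
          - (\<Phi>xx x t * \<Phi> x t - \<Phi>x x t * \<Phi>x x t) / ((\<Phi> x t)\<^sup>2 * \<mu> t)) (at x)"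
    unfolding Ux_def
    using Phi_pos[of x t]
    by (intro has_real_derivative_neg_quotient_divide_const[OF Phi_xx Phi_x _ mu_nz]) simp
  show "(- \<Phi>t x t / (\<Phi> x t * \<mu> t) + ln (\<Phi> x t) * \<mu>' t / (\<mu> t)\<^sup>2)
          + \<mu>' t / \<mu> t * (- ln (\<Phi> x t) / \<mu> t) + (Ux x t)\<^sup>2 / 2
        = - (\<Phi>xx x t * \<Phi> x t - \<Phi>x x t * \<Phi>x x t) / ((\<Phi> x t)\<^sup>2 * \<mu> t) / (2 * \<mu> t)
          - w2 t / 2 * x\<^sup>2"
    unfolding Ux_def
    by (rule cole_hopf_transforms_parabolic_to_burgers[OF Phi_pos mu_nz Phi_pde])
next
  fix x
  show "- ln (\<Phi> x t0) / \<mu> t0 = \<Upsilon>0 x"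
    using mu_nz[of t0] by (simp add: Phi_init)
qed

end
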